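(* For CL-SG with exploration rate $\gamma>0$ in the sleeping semi-bandit problem, in each round $t>\max\{\sqrt m,4\}$ and given any $\Theta_t$, $$\frac{1}{\Pr_{\Theta_t}\Big(\sum_{a\in A_t^*}\bar r_{a,t}\ge\sum_{a\in A_t^*}r_a\Big)}\le 2\,\Phi\big(-\sqrt{4/\gamma}\big)^{-1},$$ where $\Phi$ is the standard Gaussian cdf and $\Pr_{\Theta_t}(\cdot):=\Pr(\cdot\mid\Theta_t)$.
   Context: Sleeping semi-bandit problem: $N\ge2$ base arms $[N]$, arm $a$ has reward distribution $p_a$ on $[0,1]$ with mean $r_a$; $\Theta\subseteq 2^{[N]}$ feasible super arms, $m:=\max_{A\in\Theta}|A|$. Each round $t=1,\dots,T$ a (possibly adversarial) $\Theta_t\subseteq\Theta$ is revealed, the agent plays $A_t\in\Theta_t$ and observes independent $X_{a,t}\sim p_a$ for $a\in A_t$. $A_t^*\in\arg\max_{A\in\Theta_t}\sum_{a\in A}r_a$. $n_{a,t}:=\sum_{\tau<t}\mathbf{1}[a\in A_\tau]$, $\hat r_{a,n_{a,t}}$ the empirical mean of observed rewards of $a$ before round $t$ ($0$ if none). CL-SG: each round draw a single $w_t\sim\mathcal{N}(0,1)$, set $\bar r_{a,t}=\hat r_{a,n_{a,t}}+w_t\sqrt{\frac{\gamma\ln t}{n_{a,t}+1}}$ for all $a$, and play $A_t\in\arg\max_{A\in\Theta_t}\sum_{a\in A}\bar r_{a,t}$. *)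

theory Defs
  imports "HOL-Probability.Probability"
begin

definition std_normal_measure :: "real measure" where
  "std_normal_measure = density lborel std_normal_density"

definition Phi :: "real \<Rightarrow> real" where
  "Phi x = measure std_normal_measure {..x}"

definition mean_rew :: "(nat \<Rightarrow> real measure) \<Rightarrow> nat \<Rightarrow> real" where
  "mean_rew p a = integral\<^sup>L (p a) (\<lambda>x. x)"

(* A history is the list of super arms played in rounds 1,...,k (in order). *)
definition cnt :: "nat set list \<Rightarrow> nat \<Rightarrow> nat" where
  "cnt h a = length (filter (\<lambda>A. a \<in> A) h)"

(* Reward-table model: X a k is the (k+1)-th observed reward of arm a.
   Empirical mean of the observations of arm a so far (0 if none). *)
definition emp_mean :: "(nat \<Rightarrow> nat \<Rightarrow> real) \<Rightarrow> nat set list \<Rightarrow> nat \<Rightarrow> real" where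
  "emp_mean X h a = (if cnt h a = 0 then 0 else (\<Sum>k<cnt h a. X a k) / real (cnt h a))"

definition rbar :: "real \<Rightarrow> (nat \<Rightarrow> real) \<Rightarrow> (nat \<Rightarrow> nat \<Rightarrow> real) \<Rightarrow> nat set list \<Rightarrow> nat \<Rightarrow> nat \<Rightarrow> real" where
  "rbar \<gamma> w X h t a = emp_mean X h a + w t * sqrt (\<gamma> * ln (real t) / (real (cnt h a) + 1))"

definition pick :: "(nat set \<Rightarrow> nat) \<Rightarrow> nat set set \<Rightarrow> (nat \<Rightarrow> real) \<Rightarrow> nat set" where
  "pick prio S v = arg_min_on prio {A \<in> S. \<forall>B\<in>S. (\<Sum>a\<in>B. v a) \<le> (\<Sum>a\<in>A. v a)}"

primrec hist :: "real \<Rightarrow> (nat set \<Rightarrow> nat) \<Rightarrow> (nat \<Rightarrow> nat set set) \<Rightarrow> (nat \<Rightarrow> real) \<Rightarrow> (nat \<Rightarrow> nat \<Rightarrow> real) \<Rightarrow> nat \<Rightarrow> nat set list" where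
  "hist \<gamma> prio Ths w X 0 = []"
| "hist \<gamma> prio Ths w X (Suc k) =
     (let h = hist \<gamma> prio Ths w X k
      in h @ [pick prio (Ths (Suc k)) (rbar \<gamma> w X h (Suc k))])"

(* underlying probability space: noise sequence (w_t) iid N(0,1), independent reward tables
   (X a k)_k iid p_a for each arm a < N *)
definition cl_space :: "nat \<Rightarrow> (nat \<Rightarrow> real measure) \<Rightarrow> ((nat \<Rightarrow> real) \<times> (nat \<Rightarrow> nat \<Rightarrow> real)) measure" where
  "cl_space N p = (PiM UNIV (\<lambda>_::nat. std_normal_measure)) \<Otimes>\<^sub>M
                  (PiM {..<N} (\<lambda>a. PiM UNIV (\<lambda>_::nat. p a)))"

definition rbar_round :: "real \<Rightarrow> (nat set \<Rightarrow> nat) \<Rightarrow> (nat \<Rightarrow> nat set set) \<Rightarrow> nat \<Rightarrow> (nat \<Rightarrow> real) \<times> (nat \<Rightarrow> nat \<Rightarrow> real) \<Rightarrow> nat \<Rightarrow> real" where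
  "rbar_round \<gamma> prio Ths t \<omega> a =
     rbar \<gamma> (fst \<omega>) (snd \<omega>) (hist \<gamma> prio Ths (fst \<omega>) (snd \<omega>) (t - 1)) t a"

end

theory Submission
  imports Defs
begin

(* Let c = sqrt (4 / \<gamma>). If the single Gaussian sample of round t satisfies w_t \<ge> c, the
   perturbation of an arm observed n times is at least the Hoeffding radius
   sqrt (4 ln t / (n + 1)). Suppose in addition that for every arm a of A and every sample size
   1 \<le> n < t the mean of the first n rewards of a lies above r_a minus this radius. Then each
   perturbed index of A dominates its mean whatever the random history is, since the history
   only decides which n is used; an arm never observed needs sqrt (4 ln t) \<ge> 1 \<ge> r_a. The two
   events are independent, the first has probability \<Phi>(-c), and by Hoeffding and a union bound
   over |A| arms and t - 1 sample sizes the second fails with probability at most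
   |A| t / t^4 \<le> 1/2, as |A| \<le> m < t^2. *)

lemma prob_space_std_normal_measure: "prob_space std_normal_measure"
  unfolding std_normal_measure_def by (rule prob_space_normal_density) simp

lemma space_std_normal_measure [simp]: "space std_normal_measure = UNIV"
  unfolding std_normal_measure_def by simp

lemma sets_std_normal_measure [simp, measurable_cong]: "sets std_normal_measure = sets borel"
  unfolding std_normal_measure_def by simp

lemma measure_std_normal_atLeast: "measure std_normal_measure {c..} = Phi (- c)"
proof -
  interpret prob_space std_normal_measure by (rule prob_space_std_normal_measure)
  have "distributed std_normal_measure lborel (\<lambda>x. x) std_normal_density"
    unfolding distributed_def std_normal_measure_def
    by (auto simp: distr_id2 intro!: density_cong)
  then have "distributed std_normal_measure lborel (\<lambda>x. 0 + (-1) * x)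
      (normal_density (0 + (-1) * 0) (\<bar>-1\<bar> * 1))"
    by (rule normal_density_affine) auto
  then have reflect: "distr std_normal_measure lborel uminus = std_normal_measure"
    unfolding distributed_def std_normal_measure_def by simp
  have "Phi (- c) = measure (distr std_normal_measure lborel uminus) {..-c}"
    unfolding Phi_def reflect ..
  also have "\<dots> = measure std_normal_measure (uminus -` {..-c})"
    by (subst measure_distr) auto
  also have "uminus -` {..-c} = {c..}"
    by auto
  finally show ?thesis ..
qed

lemma Phi_pos: "0 < Phi x"
proof -
  interpret prob_space std_normal_measure
    by (rule prob_space_std_normal_measure)
  have "emeasure lborel {..x} \<noteq> 0"
    using emeasure_mono[of "{x - 1..x}" "{..x}" lborel] by auto
  then have "\<not> (AE y in lborel. y \<notin> {..x})"
    by (subst AE_iff_measurable[of "{..x}"]) auto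
  moreover have "AE y in lborel. y \<notin> {..x}"
    if "(\<integral>\<^sup>+ y. ennreal (std_normal_density y) * indicator {..x} y \<partial>lborel) = 0"
    using that
    by (subst (asm) nn_integral_0_iff_AE)
      (auto elim!: eventually_mono simp: indicator_def normal_density_def)
  ultimately have "emeasure std_normal_measure {..x} \<noteq> 0"
    unfolding std_normal_measure_def by (auto simp: emeasure_density)
  then show ?thesis
    unfolding Phi_def
    by (simp add: emeasure_eq_measure zero_less_measure_iff)
qed

lemma measure_PiM_component:
  assumes "\<And>i. i \<in> I \<Longrightarrow> prob_space (M i)" and "i \<in> I" and "A \<in> sets (M i)"
  shows "measure (PiM I M) {x \<in> space (PiM I M). x i \<in> A} = measure (M i) A"
proof -
  have "measure (M i) A = measure (distr (PiM I M) (M i) (\<lambda>x. x i)) A"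
    using distr_PiM_component[of I M i] assms(1,2) by simp
  also have "\<dots> = measure (PiM I M) ((\<lambda>x. x i) -` A \<inter> space (PiM I M))"
    using assms(2,3) by (intro measure_distr) auto
  finally show ?thesis
    by (simp add: vimage_def Int_def conj_commute)
qed

lemma product_prob_space_iid:
  "prob_space Q \<Longrightarrow> product_prob_space (\<lambda>_. Q)"
  by (simp add: product_prob_space.intro product_prob_space_axioms.intro
      product_sigma_finite.intro prob_space_imp_sigma_finite)

lemma measurable_PiM_coordinate_borel:
  "sets Q = sets borel \<Longrightarrow> (\<lambda>x. x i) \<in> borel_measurable (PiM UNIV (\<lambda>_. Q))"
  by (simp add: measurable_cong_sets[OF refl, of Q borel, symmetric])

lemma distr_PiM_coordinate_borel:
  assumes "prob_space Q" and "sets Q = sets borel"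
  shows "distr (PiM UNIV (\<lambda>_. Q)) borel (\<lambda>x. x i) = Q"
proof -
  interpret product_prob_space "\<lambda>_. Q" UNIV
    using assms(1) by (rule product_prob_space_iid)
  show ?thesis
    using PiM_component[of i] by (subst distr_cong[OF refl assms(2)[symmetric]]) auto
qed

lemma indep_vars_PiM_coordinates:
  fixes Q :: "real measure"
  assumes Q: "prob_space Q" and sets_Q: "sets Q = sets borel" and I: "finite I" "I \<noteq> {}"
  shows "prob_space.indep_vars (PiM UNIV (\<lambda>_. Q)) (\<lambda>_. borel) (\<lambda>i x. x i) I"
proof -
  interpret product_prob_space "\<lambda>_. Q" UNIV
    using Q by (rule product_prob_space_iid)
  have "distr (PiM UNIV (\<lambda>_. Q)) (PiM I (\<lambda>_. borel)) (\<lambda>x. \<lambda>i\<in>I. x i)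
      = distr (PiM UNIV (\<lambda>_. Q)) (PiM I (\<lambda>_. Q)) (\<lambda>x. restrict x I)"
    by (rule distr_cong) (auto intro!: sets_PiM_cong simp: sets_Q)
  also have "\<dots> = PiM I (\<lambda>_. Q)"
    using I by (intro distr_PiM_restrict_finite) auto
  finally show ?thesis
    using I(2)
    by (subst indep_vars_iff_distr_eq_PiM)
      (auto simp: distr_PiM_coordinate_borel[OF Q sets_Q]
        measurable_PiM_coordinate_borel[OF sets_Q])
qed

lemma Hoeffding_iid_mean_le:
  fixes Q :: "real measure" and n :: nat and \<epsilon> :: real
  assumes Q: "prob_space Q" and sets_Q: "sets Q = sets borel"
    and bounded: "AE x in Q. 0 \<le> x \<and> x \<le> 1" and "n \<ge> 1" and "\<epsilon> \<ge> 0"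
  shows "measure (PiM UNIV (\<lambda>_. Q))
           {x \<in> space (PiM UNIV (\<lambda>_. Q)). (\<Sum>k<n. x k) / real n \<le> integral\<^sup>L Q (\<lambda>x. x) - \<epsilon>}
         \<le> exp (- 2 * real n * \<epsilon>\<^sup>2)"
proof -
  interpret product_prob_space "\<lambda>_. Q" UNIV
    using Q by (rule product_prob_space_iid)
  have mean: "integral\<^sup>L Q (\<lambda>x. x) = expectation (\<lambda>x. x 0)"
    using integral_distr[of "\<lambda>x. x 0" "PiM UNIV (\<lambda>_. Q)" borel "\<lambda>x. x"]
    by (simp add: distr_PiM_coordinate_borel[OF Q sets_Q]
        measurable_PiM_coordinate_borel[OF sets_Q])
  have "AE x in PiM UNIV (\<lambda>_. Q). x 0 \<in> {0..1}"
    using AE_component[OF _ bounded, of 0] by simp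
  moreover have "{..<n} \<noteq> {}"
    using \<open>n \<ge> 1\<close> by (simp add: lessThan_empty_iff)
  ultimately interpret Hoeffding_ineq_iid "PiM UNIV (\<lambda>_. Q)" "{..<n}" "\<lambda>k x. x k" "\<lambda>x. x 0"
      0 1 "integral\<^sup>L Q (\<lambda>x. x)"
  proof unfold_locales
    show "integral\<^sup>L Q (\<lambda>x. x) \<equiv> expectation (\<lambda>x. x 0)"
      using mean by (rule eq_reflection)
  qed (simp_all add: indep_vars_PiM_coordinates[OF Q sets_Q]
        distr_PiM_coordinate_borel[OF Q sets_Q] measurable_PiM_coordinate_borel[OF sets_Q])
  show ?thesis
    using Hoeffding_ineq_le'[OF \<open>\<epsilon> \<ge> 0\<close>] \<open>{..<n} \<noteq> {}\<close> by simp
qed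

lemma integral_ident_le_1:
  fixes Q :: "real measure"
  assumes "prob_space Q" and "sets Q = sets borel" and "AE x in Q. 0 \<le> x \<and> x \<le> 1"
  shows "integral\<^sup>L Q (\<lambda>x. x) \<le> 1"
proof -
  interpret prob_space Q by fact
  have "AE x in Q. norm x \<le> (1::real)" "AE x in Q. x \<le> (1::real)"
    using assms(3) by (eventually_elim, auto)+
  moreover have "(\<lambda>x. x) \<in> borel_measurable Q"
    by (rule measurable_ident_sets[OF assms(2)])
  ultimately show ?thesis
    by (intro integral_le_const integrable_const_bound)
qed

definition noise_space :: "(nat \<Rightarrow> real) measure" where
  "noise_space = PiM UNIV (\<lambda>_. std_normal_measure)"

definition reward_space :: "nat \<Rightarrow> (nat \<Rightarrow> real measure) \<Rightarrow> (nat \<Rightarrow> nat \<Rightarrow> real) measure" where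
  "reward_space N p = PiM {..<N} (\<lambda>a. PiM UNIV (\<lambda>_. p a))"

lemma cl_space_eq_pair_measure: "cl_space N p = noise_space \<Otimes>\<^sub>M reward_space N p"
  unfolding cl_space_def noise_space_def reward_space_def ..

lemma prob_space_noise_space: "prob_space noise_space"
  unfolding noise_space_def by (intro prob_space_PiM prob_space_std_normal_measure)

lemma prob_space_reward_space:
  "(\<And>a. a < N \<Longrightarrow> prob_space (p a)) \<Longrightarrow> prob_space (reward_space N p)"
  unfolding reward_space_def by (intro prob_space_PiM) auto

lemma prob_space_cl_space:
  "(\<And>a. a < N \<Longrightarrow> prob_space (p a)) \<Longrightarrow> prob_space (cl_space N p)"
  unfolding cl_space_eq_pair_measure
  by (intro prob_space_pair prob_space_noise_space prob_space_reward_space)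

lemma reward_space_entry_measurable:
  assumes "\<And>a. a < N \<Longrightarrow> sets (p a) = sets borel"
  shows "(\<lambda>X. X a k) \<in> borel_measurable (reward_space N p)"
proof (cases "a < N")
  case True
  have "(\<lambda>X. X a) \<in> measurable (reward_space N p) (PiM UNIV (\<lambda>_. p a))"
    unfolding reward_space_def using True by (intro measurable_component_singleton) auto
  then show ?thesis
    using measurable_PiM_coordinate_borel[OF assms[OF True]] by (rule measurable_compose)
next
  case False
  then have "X a k = undefined k" if "X \<in> space (reward_space N p)" for X
    using that by (auto simp: reward_space_def space_PiM PiE_def extensional_def)
  then show ?thesis
    by (subst measurable_cong[where g="\<lambda>_. undefined k"]) auto
qed

definition conf_rad :: "nat \<Rightarrow> nat \<Rightarrow> real" where
  "conf_rad t n = sqrt (4 * ln (real t) / (real n + 1))"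

lemma measure_reward_mean_below_conf_rad:
  assumes prob: "\<And>a. a < N \<Longrightarrow> prob_space (p a)"
    and sets: "\<And>a. a < N \<Longrightarrow> sets (p a) = sets borel"
    and bounded: "AE x in p a. 0 \<le> x \<and> x \<le> 1"
    and "a < N" and "1 \<le> n" and "1 \<le> t"
  shows "measure (reward_space N p)
           {X \<in> space (reward_space N p). (\<Sum>k<n. X a k) / real n \<le> mean_rew p a - conf_rad t n}
         \<le> 1 / real t ^ 4"
proof -
  let ?Q = "PiM UNIV (\<lambda>_. p a)"
  let ?B = "{x \<in> space ?Q. (\<Sum>k<n. x k) / real n \<le> mean_rew p a - conf_rad t n}"
  have B: "?B \<in> sets ?Q"
    using measurable_PiM_coordinate_borel[OF sets[OF \<open>a < N\<close>]] by measurable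
  have "measure (reward_space N p)
      {X \<in> space (reward_space N p). (\<Sum>k<n. X a k) / real n \<le> mean_rew p a - conf_rad t n}
      = measure (reward_space N p) {X \<in> space (reward_space N p). X a \<in> ?B}"
    using \<open>a < N\<close> by (intro arg_cong[where f="measure _"]) (auto simp: reward_space_def space_PiM)
  also have "\<dots> = measure ?Q ?B"
    unfolding reward_space_def using prob \<open>a < N\<close> B
    by (intro measure_PiM_component prob_space_PiM) auto
  also have "\<dots> \<le> exp (- 2 * real n * (conf_rad t n)\<^sup>2)"
    unfolding mean_rew_def using \<open>a < N\<close> \<open>1 \<le> n\<close> \<open>1 \<le> t\<close>
    by (intro Hoeffding_iid_mean_le prob sets bounded) (auto simp: conf_rad_def)
  also have "\<dots> \<le> exp (- 4 * ln (real t))"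
  proof -
    have "0 \<le> ln (real t)"
      using \<open>1 \<le> t\<close> by simp
    then have "4 * ln (real t) \<le> 2 * real n * (4 * ln (real t) / (real n + 1))"
      using \<open>1 \<le> n\<close> mult_right_mono[of 1 "real n" "ln (real t)"] by (simp add: field_simps)
    then show ?thesis
      using \<open>0 \<le> ln (real t)\<close> by (simp add: conf_rad_def)
  qed
  also have "\<dots> = 1 / real t ^ 4"
  proof -
    have "exp (4 * ln (real t)) = real t ^ 4"
      using \<open>1 \<le> t\<close> exp_of_nat_mult[of 4 "ln (real t)"] by simp
    then show ?thesis
      by (simp add: exp_minus inverse_eq_divide)
  qed
  finally show ?thesis .
qed

definition good_tables ::
    "nat \<Rightarrow> (nat \<Rightarrow> real measure) \<Rightarrow> nat set \<Rightarrow> nat \<Rightarrow> (nat \<Rightarrow> nat \<Rightarrow> real) set" where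
  "good_tables N p A t = {X \<in> space (reward_space N p).
     \<forall>a\<in>A. \<forall>n\<in>{1..<t}. mean_rew p a - conf_rad t n \<le> (\<Sum>k<n. X a k) / real n}"

lemma sets_good_tables:
  assumes "\<And>a. a < N \<Longrightarrow> sets (p a) = sets borel" and "finite A"
  shows "good_tables N p A t \<in> sets (reward_space N p)"
proof -
  note reward_space_entry_measurable[OF assms(1), measurable]
  show ?thesis
    unfolding good_tables_def using assms(2) by measurable
qed

lemma measure_good_tables_ge:
  assumes prob: "\<And>a. a < N \<Longrightarrow> prob_space (p a)"
    and sets: "\<And>a. a < N \<Longrightarrow> sets (p a) = sets borel"
    and bounded: "\<And>a. a < N \<Longrightarrow> AE x in p a. 0 \<le> x \<and> x \<le> 1"
    and A: "A \<subseteq> {..<N}" "finite A" and "1 \<le> t"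
  shows "1 - real (card A) * real (t - 1) / real t ^ 4
           \<le> measure (reward_space N p) (good_tables N p A t)"
proof -
  let ?R = "reward_space N p"
  interpret R: prob_space ?R
    using prob by (rule prob_space_reward_space)
  note reward_space_entry_measurable[OF sets, measurable]
  define bad where
    "bad = (\<lambda>(a, n). {X \<in> space ?R. (\<Sum>k<n. X a k) / real n \<le> mean_rew p a - conf_rad t n})"
  have bad_sets: "bad i \<in> sets ?R" for i
    by (cases i) (simp add: bad_def)
  have "space ?R - good_tables N p A t \<subseteq> (\<Union>i\<in>A \<times> {1..<t}. bad i)"
    by (auto simp: good_tables_def bad_def)
  then have "measure ?R (space ?R - good_tables N p A t) \<le> (\<Sum>i\<in>A \<times> {1..<t}. measure ?R (bad i))"
    using A(2) bad_sets by (intro order.trans[OF R.finite_measure_mono measure_UNION_le]) auto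
  also have "\<dots> \<le> (\<Sum>i\<in>A \<times> {1..<t}. 1 / real t ^ 4)"
    using A(1) \<open>1 \<le> t\<close>
    by (intro sum_mono)
      (auto simp: bad_def intro!: measure_reward_mean_below_conf_rad prob sets bounded)
  also have "\<dots> = real (card A) * real (t - 1) / real t ^ 4"
    by (simp add: card_cartesian_product)
  finally show ?thesis
    using R.prob_compl[OF sets_good_tables[OF sets A(2)]] by simp
qed

lemma le_rbar_of_conf_rad:
  assumes "0 < \<gamma>" and "sqrt (4 / \<gamma>) \<le> w t" and "r \<le> 1" and "1 \<le> 4 * ln (real t)"
    and "cnt h a < t" and "\<forall>n\<in>{1..<t}. r - conf_rad t n \<le> (\<Sum>k<n. X a k) / real n"
  shows "r \<le> rbar \<gamma> w X h t a"
proof -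
  let ?n = "cnt h a"
  have "conf_rad t ?n = sqrt (4 / \<gamma>) * sqrt (\<gamma> * ln (real t) / (real ?n + 1))"
    using \<open>0 < \<gamma>\<close> by (simp add: conf_rad_def real_sqrt_mult[symmetric] field_simps)
  also have "\<dots> \<le> w t * sqrt (\<gamma> * ln (real t) / (real ?n + 1))"
    using assms(1,2,4) by (intro mult_right_mono) auto
  finally have "emp_mean X h a + conf_rad t ?n \<le> rbar \<gamma> w X h t a"
    unfolding rbar_def by simp
  moreover have "r \<le> emp_mean X h a + conf_rad t ?n"
  proof (cases "?n = 0")
    case True
    have "1 \<le> sqrt (4 * ln (real t))"
      using assms(4) by simp
    moreover have "emp_mean X h a + conf_rad t ?n = sqrt (4 * ln (real t))"
      using True by (simp add: emp_mean_def conf_rad_def)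
    ultimately show ?thesis
      using assms(3) by linarith
  next
    case False
    then have "?n \<in> {1..<t}"
      using assms(5) by simp
    then show ?thesis
      using False assms(6) by (fastforce simp: emp_mean_def)
  qed
  ultimately show ?thesis
    by linarith
qed

lemma measure_noise_ge_times:
  assumes "\<And>a. a < N \<Longrightarrow> prob_space (p a)" and G: "G \<in> sets (reward_space N p)"
  shows "measure (cl_space N p) ({w \<in> space noise_space. c \<le> w t} \<times> G)
           = Phi (- c) * measure (reward_space N p) G"
proof -
  interpret R: prob_space "reward_space N p"
    using assms(1) by (rule prob_space_reward_space)
  have W: "{w \<in> space noise_space. c \<le> w t} \<in> sets noise_space"
    unfolding noise_space_def using measurable_PiM_coordinate_borel[OF sets_std_normal_measure]
    by measurable
  have "measure noise_space {w \<in> space noise_space. w t \<in> {c..}} = Phi (- c)"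
    unfolding noise_space_def measure_std_normal_atLeast[symmetric]
    by (intro measure_PiM_component prob_space_std_normal_measure) auto
  then show ?thesis
    unfolding cl_space_eq_pair_measure measure_def
    using R.emeasure_pair_measure_Times[OF W G] by (simp add: enn2real_mult)
qed

lemma cl_space_noise_measurable: "(\<lambda>\<omega>. fst \<omega> k) \<in> borel_measurable (cl_space N p)"
  unfolding cl_space_eq_pair_measure noise_space_def
  using measurable_PiM_coordinate_borel[OF sets_std_normal_measure] by measurable

lemma cl_space_entry_measurable:
  "(\<And>a. a < N \<Longrightarrow> sets (p a) = sets borel) \<Longrightarrow>
     (\<lambda>\<omega>. snd \<omega> a k) \<in> borel_measurable (cl_space N p)"
  unfolding cl_space_eq_pair_measure
  by (rule measurable_compose[OF measurable_snd reward_space_entry_measurable])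

lemma rbar_measurable:
  assumes "\<And>a. a < N \<Longrightarrow> sets (p a) = sets borel"
  shows "(\<lambda>\<omega>. rbar \<gamma> (fst \<omega>) (snd \<omega>) h t a) \<in> borel_measurable (cl_space N p)"
proof -
  note cl_space_noise_measurable[measurable] cl_space_entry_measurable[OF assms, measurable]
  show ?thesis
    unfolding rbar_def emp_mean_def by measurable
qed

lemma pick_measurable:
  assumes S: "finite S" and v: "\<And>a. (\<lambda>\<omega>. v \<omega> a) \<in> borel_measurable M" and "Pow S \<subseteq> Y"
  shows "(\<lambda>\<omega>. pick prio S (v \<omega>)) \<in> measurable M (count_space (arg_min_on prio ` Y))"
proof -
  define T where "T \<omega> = {A \<in> S. \<forall>B\<in>S. (\<Sum>a\<in>B. v \<omega> a) \<le> (\<Sum>a\<in>A. v \<omega> a)}" for \<omega>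
  have "countable (Pow S)"
    using S by (simp add: countable_finite)
  have "T \<in> measurable M (count_space (Pow S))"
  proof (subst measurable_count_space_eq_countable[OF \<open>countable (Pow S)\<close>], intro conjI ballI)
    show "T \<in> space M \<rightarrow> Pow S"
      by (auto simp: T_def)
    fix U assume "U \<in> Pow S"
    then have "T -` {U} \<inter> space M
        = {\<omega> \<in> space M. \<forall>A\<in>S. A \<in> U \<longleftrightarrow> (\<forall>B\<in>S. (\<Sum>a\<in>B. v \<omega> a) \<le> (\<Sum>a\<in>A. v \<omega> a))}"
      unfolding T_def by blast
    also have "\<dots> \<in> sets M"
      using S v by measurable
    finally show "T -` {U} \<inter> space M \<in> sets M" .
  qed
  moreover have
    "arg_min_on prio \<in> measurable (count_space (Pow S)) (count_space (arg_min_on prio ` Y))"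
    using \<open>Pow S \<subseteq> Y\<close> by auto
  ultimately show ?thesis
    unfolding pick_def T_def[symmetric] by (rule measurable_compose[where f=T])
qed

lemma length_hist [simp]: "length (hist \<gamma> prio Ths w X k) = k"
  by (induction k) (simp_all add: Let_def)

lemma hist_measurable:
  assumes sets: "\<And>a. a < N \<Longrightarrow> sets (p a) = sets borel"
    and "finite \<Theta>" and Ths: "\<And>\<tau>. Ths \<tau> \<subseteq> \<Theta>"
  shows "(\<lambda>\<omega>. hist \<gamma> prio Ths (fst \<omega>) (snd \<omega>) k) \<in> measurable (cl_space N p)
           (count_space {h. set h \<subseteq> arg_min_on prio ` Pow \<Theta> \<and> length h = k})"
proof (induction k)
  case 0
  then show ?case by simp
next
  case (Suc k)
  let ?H = "\<lambda>k. {h. set h \<subseteq> arg_min_on prio ` Pow \<Theta> \<and> length h = k}"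
  define step where
    "step h \<omega> = h @ [pick prio (Ths (Suc k)) (rbar \<gamma> (fst \<omega>) (snd \<omega>) h (Suc k))]" for h \<omega>
  have "countable (?H k)"
    using \<open>finite \<Theta>\<close> by (intro countable_finite finite_lists_length_eq) auto
  moreover have "step h \<in> measurable (cl_space N p) (count_space (?H (Suc k)))" if "h \<in> ?H k" for h
  proof -
    have "(\<lambda>\<omega>. pick prio (Ths (Suc k)) (rbar \<gamma> (fst \<omega>) (snd \<omega>) h (Suc k)))
        \<in> measurable (cl_space N p) (count_space (arg_min_on prio ` Pow \<Theta>))"
      using Ths \<open>finite \<Theta>\<close>
      by (intro pick_measurable rbar_measurable[OF sets]) (auto intro: finite_subset)
    moreover have "(\<lambda>A. h @ [A])
        \<in> measurable (count_space (arg_min_on prio ` Pow \<Theta>)) (count_space (?H (Suc k)))"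
      using that by auto
    ultimately show ?thesis
      unfolding step_def by (rule measurable_compose)
  qed
  ultimately have "(\<lambda>\<omega>. step (hist \<gamma> prio Ths (fst \<omega>) (snd \<omega>) k) \<omega>)
      \<in> measurable (cl_space N p) (count_space (?H (Suc k)))"
    using measurable_compose_countable'[OF _ Suc.IH] by blast
  then show ?case
    by (simp add: step_def Let_def)
qed

lemma rbar_round_sum_measurable:
  assumes "\<And>a. a < N \<Longrightarrow> sets (p a) = sets borel" and "finite \<Theta>" and "\<And>\<tau>. Ths \<tau> \<subseteq> \<Theta>"
  shows "(\<lambda>\<omega>. \<Sum>a\<in>A. rbar_round \<gamma> prio Ths t \<omega> a) \<in> borel_measurable (cl_space N p)"
proof -
  have histories: "countable {h. set h \<subseteq> arg_min_on prio ` Pow \<Theta> \<and> length h = t - 1}"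
    using assms(2) by (intro countable_finite finite_lists_length_eq) auto
  have "(\<lambda>\<omega>. \<Sum>a\<in>A. rbar \<gamma> (fst \<omega>) (snd \<omega>) (hist \<gamma> prio Ths (fst \<omega>) (snd \<omega>) (t - 1)) t a)
      \<in> borel_measurable (cl_space N p)"
    by (rule measurable_compose_countable'[where f="\<lambda>h \<omega>. \<Sum>a\<in>A. rbar \<gamma> (fst \<omega>) (snd \<omega>) h t a",
          OF _ hist_measurable[OF assms] histories])
      (intro borel_measurable_sum rbar_measurable[OF assms(1)])
  then show ?thesis
    unfolding rbar_round_def by simp
qed

lemma noise_ge_times_good_tables_subset:
  assumes "0 < \<gamma>" and "1 \<le> 4 * ln (real t)" and "\<And>a. a \<in> A \<Longrightarrow> mean_rew p a \<le> 1"
  shows "{w \<in> space noise_space. sqrt (4 / \<gamma>) \<le> w t} \<times> good_tables N p A t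
           \<subseteq> {\<omega> \<in> space (cl_space N p).
                (\<Sum>a\<in>A. mean_rew p a) \<le> (\<Sum>a\<in>A. rbar_round \<gamma> prio Ths t \<omega> a)}"
proof clarify
  fix w X
  assume w: "w \<in> space noise_space" "sqrt (4 / \<gamma>) \<le> w t" and X: "X \<in> good_tables N p A t"
  define h where "h = hist \<gamma> prio Ths w X (t - 1)"
  have "t \<noteq> 0"
    using assms(2) by (rule contrapos_pn) simp
  then have "cnt h a < t" for a
    using length_filter_le[of "\<lambda>A. a \<in> A" h] by (simp add: cnt_def h_def)
  then have "(\<Sum>a\<in>A. mean_rew p a) \<le> (\<Sum>a\<in>A. rbar \<gamma> w X h t a)"
    using X assms by (intro sum_mono le_rbar_of_conf_rad w(2)) (auto simp: good_tables_def)
  moreover have "(w, X) \<in> space (cl_space N p)"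
    using w(1) X by (simp add: cl_space_eq_pair_measure space_pair_measure good_tables_def)
  ultimately show "(w, X) \<in> space (cl_space N p) \<and>
      (\<Sum>a\<in>A. mean_rew p a) \<le> (\<Sum>a\<in>A. rbar_round \<gamma> prio Ths t (w, X) a)"
    by (simp add: rbar_round_def h_def)
qed

lemma union_bound_le_half:
  assumes "sqrt (real k) < real t" and "4 < real t"
  shows "real k * real (t - 1) / real t ^ 4 \<le> 1 / 2"
proof -
  have "real k < real t ^ 2"
    using assms(1) real_sqrt_less_iff[of "real k" "real t ^ 2"] by simp
  then have "real k * real (t - 1) \<le> real t ^ 2 * real t"
    using assms(2) by (intro mult_mono) auto
  also have "\<dots> \<le> real t ^ 4 / 2"
    using assms(2) by (simp add: power_def field_simps)
  finally show ?thesis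
    using assms(2) by (simp add: field_simps)
qed

lemma one_le_four_ln: "4 < real t \<Longrightarrow> 1 \<le> 4 * ln (real t)"
proof -
  assume "4 < real t"
  have "exp (1 / 4 :: real) \<le> exp 1"
    by simp
  also have "\<dots> \<le> 3"
    by (rule exp_le)
  finally show ?thesis
    using \<open>4 < real t\<close> ln_ge_iff[of "real t" "1 / 4"] by simp
qed

lemma measure_optimistic_ge:
  assumes prob: "\<And>a. a < N \<Longrightarrow> prob_space (p a)"
    and sets: "\<And>a. a < N \<Longrightarrow> sets (p a) = sets borel"
    and bounded: "\<And>a. a < N \<Longrightarrow> AE x in p a. 0 \<le> x \<and> x \<le> 1"
    and A: "A \<subseteq> {..<N}" "finite A"
    and t: "sqrt (real (card A)) < real t" "4 < real t"
    and "0 < \<gamma>" and "finite \<Theta>" and "\<And>\<tau>. Ths \<tau> \<subseteq> \<Theta>"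
  shows "Phi (- sqrt (4 / \<gamma>)) / 2 \<le> measure (cl_space N p)
           {\<omega> \<in> space (cl_space N p). (\<Sum>a\<in>A. mean_rew p a) \<le> (\<Sum>a\<in>A. rbar_round \<gamma> prio Ths t \<omega> a)}"
    (is "_ \<le> measure _ ?E")
proof -
  define c where "c = sqrt (4 / \<gamma>)"
  define G where "G = good_tables N p A t"
  interpret prob_space "cl_space N p"
    using prob by (rule prob_space_cl_space)
  have "1 - real (card A) * real (t - 1) / real t ^ 4 \<le> measure (reward_space N p) G"
    unfolding G_def using A t(2) by (intro measure_good_tables_ge prob sets bounded) auto
  then have "1 / 2 \<le> measure (reward_space N p) G"
    using union_bound_le_half[OF t] by linarith
  then have "Phi (- c) / 2 \<le> Phi (- c) * measure (reward_space N p) G"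
    using Phi_pos[of "- c"] by simp
  also have "\<dots> = prob ({w \<in> space noise_space. c \<le> w t} \<times> G)"
    unfolding G_def using A(2)
    by (intro measure_noise_ge_times[symmetric] prob sets_good_tables sets)
  also have "\<dots> \<le> prob ?E"
  proof (rule finite_measure_mono)
    show "{w \<in> space noise_space. c \<le> w t} \<times> G \<subseteq> ?E"
      unfolding G_def c_def using \<open>0 < \<gamma>\<close> one_le_four_ln[OF t(2)] A(1)
      by (intro noise_ge_times_good_tables_subset)
        (auto simp: mean_rew_def intro!: integral_ident_le_1 prob sets bounded)
    show "?E \<in> events"
      using rbar_round_sum_measurable[OF sets \<open>finite \<Theta>\<close> \<open>\<And>\<tau>. Ths \<tau> \<subseteq> \<Theta>\<close>] by measurable
  qed
  finally show ?thesis
    unfolding c_def .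
qed

theorem lemma11:
  fixes N :: nat and p :: "nat \<Rightarrow> real measure" and \<Theta> :: "nat set set"
    and Ths :: "nat \<Rightarrow> nat set set" and prio :: "nat set \<Rightarrow> nat"
    and \<gamma> :: real and t :: nat and Astar :: "nat set"
  assumes "N \<ge> 2"
    and "\<And>a. a < N \<Longrightarrow> prob_space (p a)"
    and "\<And>a. a < N \<Longrightarrow> sets (p a) = sets borel"
    and "\<And>a. a < N \<Longrightarrow> (AE x in p a. 0 \<le> x \<and> x \<le> 1)"
    and "\<And>A. A \<in> \<Theta> \<Longrightarrow> A \<subseteq> {..<N}"
    and "\<And>\<tau>. Ths \<tau> \<subseteq> \<Theta> \<and> Ths \<tau> \<noteq> {}"
    and "inj_on prio \<Theta>"
    and "\<gamma> > 0"
    and "real t > max (sqrt (real (Max (card ` \<Theta>)))) 4"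
    and "Astar \<in> Ths t"
    and "\<And>B. B \<in> Ths t \<Longrightarrow> (\<Sum>a\<in>B. mean_rew p a) \<le> (\<Sum>a\<in>Astar. mean_rew p a)"
  shows "let P = measure (cl_space N p)
            {\<omega> \<in> space (cl_space N p).
               (\<Sum>a\<in>Astar. rbar_round \<gamma> prio Ths t \<omega> a) \<ge> (\<Sum>a\<in>Astar. mean_rew p a)}
         in P > 0 \<and> 1 / P \<le> 2 / Phi (- sqrt (4 / \<gamma>))"
proof -
  have "finite \<Theta>"
    using assms(5) finite_subset[of \<Theta> "Pow {..<N}"] by auto
  have Ths: "\<And>\<tau>. Ths \<tau> \<subseteq> \<Theta>"
    using assms(6) by blast
  then have "Astar \<in> \<Theta>"
    using assms(10) by blast
  then have Astar: "Astar \<subseteq> {..<N}" "finite Astar" "card Astar \<le> Max (card ` \<Theta>)"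
    using assms(5) \<open>finite \<Theta>\<close> by (auto intro: finite_subset)
  have "sqrt (real (card Astar)) \<le> sqrt (real (Max (card ` \<Theta>)))"
    using Astar(3) by simp
  moreover have "sqrt (real (Max (card ` \<Theta>))) < real t" "4 < real t"
    using assms(9) by auto
  ultimately have t: "sqrt (real (card Astar)) < real t" "4 < real t"
    by linarith+
  have "Phi (- sqrt (4 / \<gamma>)) / 2 \<le> measure (cl_space N p)
      {\<omega> \<in> space (cl_space N p).
         (\<Sum>a\<in>Astar. rbar_round \<gamma> prio Ths t \<omega> a) \<ge> (\<Sum>a\<in>Astar. mean_rew p a)}"
    by (rule measure_optimistic_ge[where N=N and p=p and Ths=Ths,
          OF assms(2-4) Astar(1,2) t assms(8) \<open>finite \<Theta>\<close> Ths])
  then show ?thesis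
    using Phi_pos[of "- sqrt (4 / \<gamma>)"] by (auto simp: Let_def field_simps)
qed

end
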